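(* Let $w\geqslant2$, $h\geqslant1$ be integers and $\underline h=2^{\lfloor\log_2h\rfloor}$. Then $\mathrm{OR}(\mathcal{H}_{h,w})\geqslant\mathrm{OR}(\mathcal{H}_{\underline h,w})$, where $\mathcal{H}_{h,w}$ denotes the set of fast Hough transform patterns on the $h\times w$ image.
   Context: Image: for height $h$ and width $w$, the set $I$ of pixels $p_{ij}$, $i=0,\dots,h-1$ (row, from the bottom), $j=0,\dots,w-1$ (column). A pattern is a nonempty subset of $I$; a pattern set $\mathcal{T}=\{T_k\}_{k=1}^m$ is a nonempty set of distinct patterns; computing it means computing all $y_k=\sum_{p\in T_k}p$. A circuit is a directed acyclic graph with one input node of fanin zero per pixel and $m$ output nodes of fanout zero; each node of nonzero fanin (gate) computes the semigroup sum of its in-neighbours. Size = number of edges. $\mathrm{OR}(\mathcal{T})$ is the minimal size of a circuit computing $\mathcal{T}$ over $(\{0,1\},\vee)$. FHT patterns: for a pattern $T$ with exactly one pixel in each of its rows, $\Delta(T)=(j_{top}-j_{bot})\bmod w$ (column indices of topmost and bottommost pixels), $\mathit{tran}_{a,b}(T)=\{p_{i+a,\,(j+b)\bmod w}\mid p_{ij}\in T\}$. For $h=2^d$: $\mathcal{H}_0=\{\{p_{0j}\}\mid j=0,\dots,w-1\}$, $\mathcal{H}_k=\{T\cup\mathit{tran}_{2^{k-1},\,\Delta(T)+s}(T)\mid T\in\mathcal{H}_{k-1},\ s\in\{0,1\}\}$ for $k=1,\dots,d$, and $\mathcal{H}_{h,w}=\mathcal{H}_d$. For arbitrary $h$, with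 $\overline h=2^{\lceil\log_2h\rceil}$, view the $h\times w$ image $I$ as the bottom $h$ rows of the $\overline h\times w$ image and set $\mathcal{H}_{h,w}=\{T\cap I\mid T\in\mathcal{H}_{\overline h,w}\}$. *)

theory Defs
  imports Complex_Main
begin

(* Pixel p_{ij} is the pair (i,j): i = row (from the bottom), j = column. *)
type_synonym pixel = "nat \<times> nat"

definition image :: "nat \<Rightarrow> nat \<Rightarrow> pixel set" where
  "image h w = {0..<h} \<times> {0..<w}"

definition is_pattern :: "nat \<Rightarrow> nat \<Rightarrow> pixel set \<Rightarrow> bool" where
  "is_pattern h w T \<longleftrightarrow> T \<noteq> {} \<and> T \<subseteq> image h w"

definition is_pattern_set :: "nat \<Rightarrow> nat \<Rightarrow> pixel set set \<Rightarrow> bool" where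
  "is_pattern_set h w \<T> \<longleftrightarrow> \<T> \<noteq> {} \<and> finite \<T> \<and> (\<forall>T\<in>\<T>. is_pattern h w T)"

(* A circuit: finite DAG with node set V (nodes are naturals), edge set E;
   inp maps each pixel to its input node (the input nodes are exactly the nodes of fanin 0);
   out maps each pattern of the pattern set to a distinct output node of fanout 0.
   Over ({0,1},\<or>) every gate (node of nonzero fanin) computes the OR of its in-neighbours. *)
definition or_circuit_computes ::
  "nat \<Rightarrow> nat \<Rightarrow> pixel set set \<Rightarrow> nat set \<Rightarrow> (nat \<times> nat) set
     \<Rightarrow> (pixel \<Rightarrow> nat) \<Rightarrow> (pixel set \<Rightarrow> nat) \<Rightarrow> bool" where
  "or_circuit_computes h w \<T> V E inp out \<longleftrightarrow>
     finite V \<and> E \<subseteq> V \<times> V \<and> acyclic E \<and>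
     inj_on inp (image h w) \<and>
     inp ` image h w = {v \<in> V. \<forall>u. (u, v) \<notin> E} \<and>
     inj_on out \<T> \<and>
     (\<forall>T\<in>\<T>. out T \<in> V \<and> (\<forall>u. (out T, u) \<notin> E)) \<and>
     (\<forall>(x :: pixel \<Rightarrow> bool) (val :: nat \<Rightarrow> bool).
        ((\<forall>p\<in>image h w. val (inp p) = x p) \<and>
         (\<forall>v\<in>V. (\<exists>u. (u, v) \<in> E) \<longrightarrow> val v = (\<exists>u. (u, v) \<in> E \<and> val u)))
        \<longrightarrow> (\<forall>T\<in>\<T>. val (out T) = (\<exists>p\<in>T. x p)))"

definition OR_complexity :: "nat \<Rightarrow> nat \<Rightarrow> pixel set set \<Rightarrow> nat" where
  "OR_complexity h w \<T> =
     (LEAST n. \<exists>V E inp out. or_circuit_computes h w \<T> V E inp out \<and> card E = n)"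

definition col_at :: "pixel set \<Rightarrow> nat \<Rightarrow> nat" where
  "col_at T i = (THE j. (i, j) \<in> T)"

definition Delta :: "nat \<Rightarrow> pixel set \<Rightarrow> nat" where
  "Delta w T = nat ((int (col_at T (Max (fst ` T))) - int (col_at T (Min (fst ` T)))) mod int w)"

definition tran :: "nat \<Rightarrow> nat \<Rightarrow> nat \<Rightarrow> pixel set \<Rightarrow> pixel set" where
  "tran w a b T = {(i + a, (j + b) mod w) | i j. (i, j) \<in> T}"

fun FHT_pow :: "nat \<Rightarrow> nat \<Rightarrow> pixel set set" where
  "FHT_pow w 0 = {{(0, j)} | j. j < w}"
| "FHT_pow w (Suc k) =
     {T \<union> tran w (2 ^ k) (Delta w T + s) T | T s. T \<in> FHT_pow w k \<and> s \<in> {0, 1}}"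

definition FHT :: "nat \<Rightarrow> nat \<Rightarrow> pixel set set" where
  "FHT h w = {T \<inter> image h w | T. T \<in> FHT_pow w (nat \<lceil>log 2 (real h)\<rceil>)}"

end

theory Submission
  imports Defs
begin

text \<open>A circuit computing patterns on an image of height h yields one for their restrictions
  to the bottom h' rows: keep the part reachable from the inputs of those rows. When all other
  inputs are 0, every gate outside this part carries 0, so the kept part computes the OR over
  each restricted pattern, with no more edges than before. Every FHT pattern of height
  h' \<le> h is such a restriction, because the dyadic construction only adds rows above the
  existing ones. Hence the OR-complexity of the FHT patterns is monotone in the height, for
  every width, and the theorem is the case h' = 2^floor(log2 h).\<close>

lemma FHT_pow_has_bottom_pixel: "T \<in> FHT_pow w k \<Longrightarrow> \<exists>j<w. (0, j) \<in> T"
  by (induction k arbitrary: T) auto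

lemma tran_rows_ge: "(i, j) \<in> tran w a b T \<Longrightarrow> a \<le> i"
  unfolding tran_def by auto

lemma FHT_pow_extend:
  assumes "T \<in> FHT_pow w k" and "k \<le> m"
  shows "\<exists>T' \<in> FHT_pow w m. T' \<inter> image (2 ^ k) w = T \<inter> image (2 ^ k) w"
  using assms(2)
proof (induction m rule: dec_induct)
  case base
  show ?case using assms(1) by blast
next
  case (step m)
  then obtain T' where T': "T' \<in> FHT_pow w m" "T' \<inter> image (2 ^ k) w = T \<inter> image (2 ^ k) w"
    by blast
  define T'' where "T'' = T' \<union> tran w (2 ^ m) (Delta w T') T'"
  have "T'' \<in> FHT_pow w (Suc m)"
    unfolding T''_def using T'(1) by (auto intro!: exI[of _ 0])
  moreover have "(2::nat) ^ k \<le> 2 ^ m"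
    by (rule power_increasing[OF step(1)]) simp
  then have "tran w (2 ^ m) (Delta w T') T' \<inter> image (2 ^ k) w = {}"
    unfolding image_def by (auto dest!: tran_rows_ge simp del: power_increasing_iff)
  then have "T'' \<inter> image (2 ^ k) w = T \<inter> image (2 ^ k) w"
    unfolding T''_def using T'(2) by blast
  ultimately show ?case
    by blast
qed

lemma le_two_power_ceiling_log:
  assumes "1 \<le> n"
  shows "n \<le> 2 ^ nat \<lceil>log 2 (real n)\<rceil>"
proof -
  have "real n = 2 powr log 2 (real n)"
    using assms by simp
  also have "\<dots> \<le> 2 powr real (nat \<lceil>log 2 (real n)\<rceil>)"
    by (intro powr_mono) linarith+
  finally show ?thesis
    by (simp add: powr_realpow)
qed

lemma two_power_floor_log_le:
  assumes "1 \<le> n"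
  shows "2 ^ nat \<lfloor>log 2 (real n)\<rfloor> \<le> n"
proof -
  have "0 \<le> log 2 (real n)"
    using assms by simp
  then have "2 powr real (nat \<lfloor>log 2 (real n)\<rfloor>) \<le> 2 powr log 2 (real n)"
    by (intro powr_mono) linarith+
  also have "\<dots> = real n"
    using assms by simp
  finally show ?thesis
    by (simp add: powr_realpow)
qed

lemma ceiling_log_mono:
  assumes "1 \<le> m" and "m \<le> n"
  shows "nat \<lceil>log 2 (real m)\<rceil> \<le> nat \<lceil>log 2 (real n)\<rceil>"
  using assms by (intro nat_mono ceiling_mono) simp

lemma FHT_restriction:
  assumes "1 \<le> h'" and "h' \<le> h" and "T' \<in> FHT h' w"
  shows "\<exists>T \<in> FHT h w. T \<inter> image h' w = T'"
proof -
  define k where "k = nat \<lceil>log 2 (real h')\<rceil>"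
  obtain T where T: "T \<in> FHT_pow w k" "T' = T \<inter> image h' w"
    using assms(3) unfolding FHT_def k_def by blast
  have "k \<le> nat \<lceil>log 2 (real h)\<rceil>"
    unfolding k_def using assms(1,2) by (rule ceiling_log_mono)
  then obtain T'' where T'': "T'' \<in> FHT_pow w (nat \<lceil>log 2 (real h)\<rceil>)"
    "T'' \<inter> image (2 ^ k) w = T \<inter> image (2 ^ k) w"
    using FHT_pow_extend[OF T(1)] by blast
  have "image h' w \<subseteq> image (2 ^ k) w" "image h' w \<subseteq> image h w"
    using le_two_power_ceiling_log[OF assms(1)] assms(2) unfolding k_def image_def by auto
  then have "(T'' \<inter> image h w) \<inter> image h' w = T'"
    using T(2) T''(2) by blast
  moreover have "T'' \<inter> image h w \<in> FHT h w"
    unfolding FHT_def using T''(1) by blast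
  ultimately show ?thesis
    by blast
qed

lemma FHT_nonempty: "1 \<le> h \<Longrightarrow> T \<in> FHT h w \<Longrightarrow> T \<noteq> {}"
  unfolding FHT_def image_def by (auto dest!: FHT_pow_has_bottom_pixel)

lemma FHT_subset_image: "T \<in> FHT h w \<Longrightarrow> T \<subseteq> image h w"
  unfolding FHT_def by blast

lemma finite_FHT: "finite (FHT h w)"
proof (rule finite_subset)
  show "FHT h w \<subseteq> Pow (image h w)"
    using FHT_subset_image by blast
  show "finite (Pow (image h w))"
    by (simp add: image_def)
qed

definition or_consistent :: "nat set \<Rightarrow> (nat \<times> nat) set \<Rightarrow> (nat \<Rightarrow> bool) \<Rightarrow> bool" where
  "or_consistent V E val \<longleftrightarrow> (\<forall>v\<in>V. (\<exists>u. (u, v) \<in> E) \<longrightarrow> val v = (\<exists>u. (u, v) \<in> E \<and> val u))"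

lemma or_circuit_computes_iff:
  "or_circuit_computes h w \<T> V E inp out \<longleftrightarrow>
     finite V \<and> E \<subseteq> V \<times> V \<and> acyclic E \<and>
     inj_on inp (image h w) \<and> inp ` image h w = {v \<in> V. \<forall>u. (u, v) \<notin> E} \<and>
     inj_on out \<T> \<and> (\<forall>T\<in>\<T>. out T \<in> V \<and> (\<forall>u. (out T, u) \<notin> E)) \<and>
     (\<forall>x val. (\<forall>p\<in>image h w. val (inp p) = x p) \<longrightarrow> or_consistent V E val \<longrightarrow>
        (\<forall>T\<in>\<T>. val (out T) = (\<exists>p\<in>T. x p)))"
  unfolding or_circuit_computes_def or_consistent_def by (simp only: imp_conjL)

locale or_circuit =
  fixes h w :: nat and \<T> :: "pixel set set" and V :: "nat set" and E :: "(nat \<times> nat) set"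
    and inp :: "pixel \<Rightarrow> nat" and out :: "pixel set \<Rightarrow> nat"
  assumes computes: "or_circuit_computes h w \<T> V E inp out"
begin

lemma finite_nodes: "finite V"
  and edges_subset: "E \<subseteq> V \<times> V"
  and acyclic_edges: "acyclic E"
  and inj_inp: "inj_on inp (image h w)"
  and input_nodes: "inp ` image h w = {v \<in> V. \<forall>u. (u, v) \<notin> E}"
  and inj_out: "inj_on out \<T>"
  and output_nodes: "T \<in> \<T> \<Longrightarrow> out T \<in> V \<and> (\<forall>u. (out T, u) \<notin> E)"
  and output_value: "\<forall>p\<in>image h w. val (inp p) = x p \<Longrightarrow> or_consistent V E val \<Longrightarrow>
                       T \<in> \<T> \<Longrightarrow> val (out T) = (\<exists>p\<in>T. x p)"
  using computes unfolding or_circuit_computes_iff by simp_all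

lemma finite_edges: "finite E"
  using edges_subset finite_nodes by (meson finite_SigmaI finite_subset)

lemma input_no_pred: "p \<in> image h w \<Longrightarrow> (u, inp p) \<notin> E"
  using input_nodes by blast

end

locale or_subcircuit = or_circuit +
  fixes h' :: nat
  assumes sub_image: "image h' w \<subseteq> image h w"
begin

definition reached :: "nat set" where
  "reached = {v \<in> V. \<exists>p\<in>image h' w. (inp p, v) \<in> E\<^sup>*}"

definition reached_edges :: "(nat \<times> nat) set" where
  "reached_edges = E \<inter> reached \<times> reached"

lemma reached_succ:
  assumes "u \<in> reached" and "(u, v) \<in> E"
  shows "v \<in> reached"
  using assms edges_subset unfolding reached_def by (blast intro: rtrancl_into_rtrancl)

text \<open>The source of a path to a reached gate is an input node, which has no predecessor,
  so the last edge of the path starts at a reached node.\<close>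
lemma reached_pred:
  assumes "v \<in> reached" and "(u, v) \<in> E"
  shows "\<exists>u'\<in>reached. (u', v) \<in> E"
proof -
  obtain p where p: "p \<in> image h' w" "(inp p, v) \<in> E\<^sup>*"
    using assms(1) unfolding reached_def by blast
  have "v \<noteq> inp p"
    using assms(2) input_no_pred p(1) sub_image by blast
  then obtain u' where "(inp p, u') \<in> E\<^sup>*" "(u', v) \<in> E"
    using p(2) by (metis rtranclE)
  then show ?thesis
    using p(1) edges_subset unfolding reached_def by blast
qed

lemma inp_reached_iff:
  assumes "p \<in> image h w"
  shows "inp p \<in> reached \<longleftrightarrow> p \<in> image h' w"
proof
  assume "inp p \<in> reached"
  then obtain q where q: "q \<in> image h' w" "(inp q, inp p) \<in> E\<^sup>*"
    unfolding reached_def by blast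
  then have "inp q = inp p"
    using input_no_pred[OF assms] by (metis rtranclE)
  then show "p \<in> image h' w"
    using inj_onD[OF inj_inp] q(1) sub_image assms by blast
next
  assume "p \<in> image h' w"
  then show "inp p \<in> reached"
    using input_nodes sub_image unfolding reached_def by blast
qed

text \<open>Extending a valuation of the reached subcircuit by False elsewhere gives a valuation
  of the whole circuit for the input that vanishes outside the sub-image.\<close>
lemma reached_output_value:
  assumes inputs: "\<forall>p\<in>image h' w. val (inp p) = x p"
    and consistent: "or_consistent reached reached_edges val"
    and "T \<in> \<T>"
  shows "(out T \<in> reached \<and> val (out T)) = (\<exists>p\<in>T \<inter> image h' w. x p)"
proof -
  let ?val = "\<lambda>v. v \<in> reached \<and> val v"
  let ?x = "\<lambda>p. p \<in> image h' w \<and> x p"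
  have "\<forall>p\<in>image h w. ?val (inp p) = ?x p"
    using inputs inp_reached_iff by blast
  moreover have "or_consistent V E ?val"
    unfolding or_consistent_def
  proof (intro ballI impI)
    fix v assume "v \<in> V" and has_pred: "\<exists>u. (u, v) \<in> E"
    show "?val v = (\<exists>u. (u, v) \<in> E \<and> ?val u)"
    proof (cases "v \<in> reached")
      case True
      then have "\<exists>u. (u, v) \<in> reached_edges"
        using has_pred reached_pred unfolding reached_edges_def by blast
      then have "val v = (\<exists>u. (u, v) \<in> reached_edges \<and> val u)"
        using consistent True unfolding or_consistent_def reached_edges_def by blast
      then show ?thesis
        using True unfolding reached_edges_def by blast
    next
      case False
      then show ?thesis
        using reached_succ by blast
    qed
  qed
  ultimately have "?val (out T) = (\<exists>p\<in>T. ?x p)"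
    by (rule output_value) (rule \<open>T \<in> \<T>\<close>)
  then show ?thesis
    by blast
qed

lemma out_reached:
  assumes "T \<in> \<T>" and "T \<inter> image h' w \<noteq> {}"
  shows "out T \<in> reached"
proof -
  have "or_consistent reached reached_edges (\<lambda>_. True)"
    unfolding or_consistent_def by blast
  then show ?thesis
    using reached_output_value[of "\<lambda>_. True" "\<lambda>_. True"] assms by blast
qed

lemma reached_inputs: "inp ` image h' w = {v \<in> reached. \<forall>u. (u, v) \<notin> reached_edges}"
proof
  show "inp ` image h' w \<subseteq> {v \<in> reached. \<forall>u. (u, v) \<notin> reached_edges}"
    using inp_reached_iff input_no_pred sub_image unfolding reached_edges_def by blast
next
  show "{v \<in> reached. \<forall>u. (u, v) \<notin> reached_edges} \<subseteq> inp ` image h' w"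
  proof
    fix v assume v: "v \<in> {v \<in> reached. \<forall>u. (u, v) \<notin> reached_edges}"
    then have "\<forall>u. (u, v) \<notin> E"
      using reached_pred unfolding reached_edges_def by blast
    then obtain p where "p \<in> image h w" "v = inp p"
      using v input_nodes unfolding reached_def by blast
    then show "v \<in> inp ` image h' w"
      using v inp_reached_iff by blast
  qed
qed

lemma subcircuit_computes:
  assumes restr: "\<forall>T'\<in>\<T>'. T' \<noteq> {} \<and> (\<exists>T\<in>\<T>. T \<inter> image h' w = T')"
  shows "\<exists>out'. or_circuit_computes h' w \<T>' reached reached_edges inp out'"
proof -
  obtain sel where sel: "sel T' \<in> \<T>" "sel T' \<inter> image h' w = T'" if "T' \<in> \<T>'" for T'
    using restr by metis
  have sel_reached: "out (sel T') \<in> reached" if "T' \<in> \<T>'" for T'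
    using out_reached sel restr that by metis
  have "inj_on (out \<circ> sel) \<T>'"
    using inj_onD[OF inj_out] sel by (intro inj_onI) (metis comp_apply)
  moreover have "(out \<circ> sel) T' \<in> reached \<and> (\<forall>u. ((out \<circ> sel) T', u) \<notin> reached_edges)"
    if "T' \<in> \<T>'" for T'
    using sel_reached output_nodes sel that unfolding reached_edges_def by simp
  moreover have "val ((out \<circ> sel) T') = (\<exists>p\<in>T'. x p)"
    if "\<forall>p\<in>image h' w. val (inp p) = x p" "or_consistent reached reached_edges val" "T' \<in> \<T>'"
    for x val T'
    using reached_output_value[OF that(1,2) sel(1)] sel_reached sel(2) that(3) by simp
  moreover have "finite reached" "reached_edges \<subseteq> reached \<times> reached" "acyclic reached_edges"
    using finite_nodes acyclic_edges unfolding reached_def reached_edges_def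
    by (auto intro: acyclic_subset)
  ultimately have "or_circuit_computes h' w \<T>' reached reached_edges inp (out \<circ> sel)"
    unfolding or_circuit_computes_iff
    using inj_on_subset[OF inj_inp sub_image] reached_inputs by blast
  then show ?thesis
    by blast
qed

lemma card_reached_edges_le: "card reached_edges \<le> card E"
  unfolding reached_edges_def using finite_edges by (simp add: card_mono)

end

lemma OR_complexity_le:
  "or_circuit_computes h w \<T> V E inp out \<Longrightarrow> OR_complexity h w \<T> \<le> card E"
  unfolding OR_complexity_def by (rule Least_le) blast

lemma OR_complexity_attained:
  assumes "\<exists>V E inp out. or_circuit_computes h w \<T> V E inp out"
  shows "\<exists>V E inp out. or_circuit_computes h w \<T> V E inp out \<and> card E = OR_complexity h w \<T>"
  using LeastI_ex[of "\<lambda>n. \<exists>V E inp out. or_circuit_computes h w \<T> V E inp out \<and> card E = n"] assms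
  unfolding OR_complexity_def by blast

text \<open>The depth-one circuit with an edge from each pixel to the output of each pattern
  containing it. Numbering inputs evenly and outputs oddly keeps them apart and makes
  every edge go from even to odd, so no path has length two.\<close>
lemma or_circuit_exists:
  assumes fin: "finite \<T>" and patterns: "\<forall>T\<in>\<T>. T \<noteq> {} \<and> T \<subseteq> image h w"
  shows "\<exists>V E inp out. or_circuit_computes h w \<T> V E inp out"
proof -
  have fin_image: "finite (image h w)"
    by (simp add: image_def)
  obtain g :: "pixel \<Rightarrow> nat" where g: "inj_on g (image h w)"
    using finite_imp_inj_to_nat_seg[OF fin_image] by blast
  obtain f :: "pixel set \<Rightarrow> nat" where f: "inj_on f \<T>"
    using finite_imp_inj_to_nat_seg[OF fin] by blast
  define inp where "inp p = 2 * g p" for p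
  define out where "out T = 2 * f T + 1" for T
  define E where "E = {(inp p, out T) | p T. T \<in> \<T> \<and> p \<in> T}"
  have inj_inp: "inj_on inp (image h w)"
    using g unfolding inp_def inj_on_def by auto
  have inj_out: "inj_on out \<T>"
    using f unfolding out_def inj_on_def by auto
  have edge_parity: "(u, v) \<in> E \<Longrightarrow> even u \<and> odd v" for u v
    unfolding E_def inp_def out_def by auto
  have "acyclic E"
  proof -
    have "trans E"
      unfolding trans_def using edge_parity by blast
    then show ?thesis
      unfolding acyclic_def using edge_parity by (auto simp: trancl_id)
  qed
  have out_preds: "(u, out T) \<in> E \<longleftrightarrow> u \<in> inp ` T" if "T \<in> \<T>" for u T
    using inj_onD[OF inj_out] that unfolding E_def by blast
  have output_has_pred: "\<exists>u. (u, out T) \<in> E" if T: "T \<in> \<T>" for T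
  proof -
    obtain p where "p \<in> T"
      using patterns T by blast
    then have "(inp p, out T) \<in> E"
      unfolding E_def using T by blast
    then show ?thesis ..
  qed
  have inputs_no_pred: "{v \<in> inp ` image h w \<union> out ` \<T>. \<forall>u. (u, v) \<notin> E} = inp ` image h w"
    using output_has_pred edge_parity unfolding inp_def by fastforce
  have outputs: "out T \<in> inp ` image h w \<union> out ` \<T> \<and> (\<forall>u. (out T, u) \<notin> E)" if "T \<in> \<T>" for T
    using that edge_parity unfolding out_def by fastforce
  have "E \<subseteq> (inp ` image h w \<union> out ` \<T>) \<times> (inp ` image h w \<union> out ` \<T>)"
    using patterns unfolding E_def by blast
  moreover have "val (out T) = (\<exists>p\<in>T. x p)"
    if inputs: "\<forall>p\<in>image h w. val (inp p) = x p"
      and consistent: "or_consistent (inp ` image h w \<union> out ` \<T>) E val"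
      and T: "T \<in> \<T>" for x val T
  proof -
    have "out T \<in> inp ` image h w \<union> out ` \<T>"
      using T by blast
    then have "val (out T) = (\<exists>u. (u, out T) \<in> E \<and> val u)"
      using consistent output_has_pred[OF T] unfolding or_consistent_def by blast
    also have "\<dots> = (\<exists>p\<in>T. val (inp p))"
      using out_preds[OF T] by auto
    also have "\<dots> = (\<exists>p\<in>T. x p)"
      using inputs patterns T by blast
    finally show ?thesis .
  qed
  ultimately have "or_circuit_computes h w \<T> (inp ` image h w \<union> out ` \<T>) E inp out"
    unfolding or_circuit_computes_iff
    using fin fin_image inj_inp inj_out \<open>acyclic E\<close> inputs_no_pred outputs by simp
  then show ?thesis
    by blast
qed

lemma OR_complexity_restrict_le:
  assumes "finite \<T>" and "\<forall>T\<in>\<T>. T \<noteq> {} \<and> T \<subseteq> image h w"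
    and "image h' w \<subseteq> image h w"
    and "\<forall>T'\<in>\<T>'. T' \<noteq> {} \<and> (\<exists>T\<in>\<T>. T \<inter> image h' w = T')"
  shows "OR_complexity h' w \<T>' \<le> OR_complexity h w \<T>"
proof -
  obtain V E inp out where C: "or_circuit_computes h w \<T> V E inp out"
    and card: "card E = OR_complexity h w \<T>"
    using OR_complexity_attained[OF or_circuit_exists[OF assms(1,2)]] by blast
  interpret or_subcircuit h w \<T> V E inp out h'
    using C assms(3) by unfold_locales
  obtain out' where "or_circuit_computes h' w \<T>' reached reached_edges inp out'"
    using subcircuit_computes[OF assms(4)] by blast
  then have "OR_complexity h' w \<T>' \<le> card reached_edges"
    by (rule OR_complexity_le)
  then show ?thesis
    using card_reached_edges_le card by simp
qed

lemma OR_complexity_FHT_mono: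
  assumes "1 \<le> h'" and "h' \<le> h"
  shows "OR_complexity h' w (FHT h' w) \<le> OR_complexity h w (FHT h w)"
proof (rule OR_complexity_restrict_le)
  show "finite (FHT h w)"
    by (rule finite_FHT)
  show "\<forall>T\<in>FHT h w. T \<noteq> {} \<and> T \<subseteq> image h w"
    using FHT_nonempty[of h] FHT_subset_image assms by simp
  show "image h' w \<subseteq> image h w"
    using assms(2) unfolding image_def by auto
  show "\<forall>T'\<in>FHT h' w. T' \<noteq> {} \<and> (\<exists>T\<in>FHT h w. T \<inter> image h' w = T')"
    using FHT_nonempty[OF assms(1)] FHT_restriction[OF assms] by simp
qed

theorem proposition9:
  fixes h w :: nat
  assumes "w \<ge> 2" and "h \<ge> 1"
  shows "OR_complexity h w (FHT h w)
           \<ge> OR_complexity (2 ^ nat \<lfloor>log 2 (real h)\<rfloor>) w (FHT (2 ^ nat \<lfloor>log 2 (real h)\<rfloor>) w)"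
  using assms(2) two_power_floor_log_le by (intro OR_complexity_FHT_mono) simp_all

end
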